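(* Let $X$ be a topological space, $\Delta$ a partition of $X$, $Y=X/\Delta$ with the quotient topology, $p:X\to Y$ the quotient map, $\omega\in\Delta$ and $y=p(\omega)$. Then $H(\omega)\subset H_S(\omega)\subset p^{-1}(H(y))$. If $p$ is an open map, then $H(\omega)=H_S(\omega)=p^{-1}(H(y))$ and $p(H_S(\omega))=H(y)$.
   Context: For $y\in Y$, $H(y)=\bigcap_V\overline{V}$ over all neighborhoods $V$ of $y$. For $U\subset X$, $S(U)=p^{-1}(p(U))$ is its saturation. For $\omega\in\Delta$: $H(\omega)=\bigcap_{N}\overline{S(N)}$ where $N$ runs over all open neighborhoods of $\omega$ in $X$, and $H_S(\omega)=\bigcap_{N_S}\overline{N_S}$ where $N_S$ runs over all saturated open neighborhoods of $\omega$. *)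

theory Defs
  imports "HOL-Analysis.Analysis"
begin

definition is_partition :: "'a topology \<Rightarrow> 'a set set \<Rightarrow> bool" where
  "is_partition X \<Delta> \<longleftrightarrow> (\<forall>B\<in>\<Delta>. B \<noteq> {}) \<and> \<Union>\<Delta> = topspace X \<and>
     (\<forall>A\<in>\<Delta>. \<forall>B\<in>\<Delta>. A \<noteq> B \<longrightarrow> A \<inter> B = {})"

definition qmap :: "'a set set \<Rightarrow> 'a \<Rightarrow> 'a set" where
  "qmap \<Delta> x = (THE B. B \<in> \<Delta> \<and> x \<in> B)"

definition qtop :: "'a topology \<Rightarrow> 'a set set \<Rightarrow> 'a set topology" where
  "qtop X \<Delta> = topology (\<lambda>V. V \<subseteq> \<Delta> \<and> openin X {x \<in> topspace X. qmap \<Delta> x \<in> V})"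

definition Hpt :: "'b topology \<Rightarrow> 'b \<Rightarrow> 'b set" where
  "Hpt Y y = \<Inter> {Y closure_of V | V. V \<subseteq> topspace Y \<and> (\<exists>U. openin Y U \<and> y \<in> U \<and> U \<subseteq> V)}"

definition sat :: "'a topology \<Rightarrow> 'a set set \<Rightarrow> 'a set \<Rightarrow> 'a set" where
  "sat X \<Delta> U = {x \<in> topspace X. qmap \<Delta> x \<in> qmap \<Delta> ` U}"

definition Hblk :: "'a topology \<Rightarrow> 'a set set \<Rightarrow> 'a set \<Rightarrow> 'a set" where
  "Hblk X \<Delta> \<omega> = \<Inter> {X closure_of (sat X \<Delta> N) | N. openin X N \<and> \<omega> \<subseteq> N}"

definition HS :: "'a topology \<Rightarrow> 'a set set \<Rightarrow> 'a set \<Rightarrow> 'a set" where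
  "HS X \<Delta> \<omega> = \<Inter> {X closure_of N | N. openin X N \<and> \<omega> \<subseteq> N \<and> sat X \<Delta> N = N}"

end

theory Submission
  imports Defs
begin

text \<open>Write p for the quotient map and y = p(\<omega>). A saturated open N \<supseteq> \<omega> is its own saturation,
  and the preimage of an open V \<ni> y is a saturated open neighbourhood of \<omega>; so H(\<omega>) \<subseteq> H_S(\<omega>), and
  continuity of p, which maps the closure of p^-1(V) into the closure of V, gives
  H_S(\<omega>) \<subseteq> p^-1(H(y)). When p is open, S(N) is open for every open N, and p pulls closures back:
  p(x) \<in> cl T forces x \<in> cl p^-1(T). These two facts reverse both inclusions, and surjectivity of p
  turns p^-1(H(y)) = H_S(\<omega>) into p(H_S(\<omega>)) = H(y).\<close>

lemma qmap_eq:
  assumes "is_partition X \<Delta>" and "B \<in> \<Delta>" and "x \<in> B"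
  shows "qmap \<Delta> x = B"
  unfolding qmap_def
proof (rule the_equality)
  show "B \<in> \<Delta> \<and> x \<in> B" using assms(2,3) by blast
  fix C assume "C \<in> \<Delta> \<and> x \<in> C"
  then show "C = B" using assms unfolding is_partition_def by blast
qed

lemma qmap_in_partition:
  assumes "is_partition X \<Delta>" and "x \<in> topspace X"
  shows "qmap \<Delta> x \<in> \<Delta> \<and> x \<in> qmap \<Delta> x"
proof -
  obtain B where "B \<in> \<Delta>" "x \<in> B" using assms unfolding is_partition_def by blast
  then show ?thesis using qmap_eq[OF assms(1)] by simp
qed

lemma partition_block_subset_topspace:
  assumes "is_partition X \<Delta>" and "B \<in> \<Delta>"
  shows "B \<subseteq> topspace X"
  using assms unfolding is_partition_def by blast

lemma qmap_image_block:
  assumes "is_partition X \<Delta>" and "B \<in> \<Delta>"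
  shows "qmap \<Delta> ` B = {B}"
proof -
  have "B \<noteq> {}" using assms unfolding is_partition_def by simp
  moreover have "qmap \<Delta> ` B \<subseteq> {B}" using qmap_eq[OF assms] by blast
  ultimately show ?thesis by blast
qed

lemma qmap_image_preimage:
  assumes "is_partition X \<Delta>" and "S \<subseteq> \<Delta>"
  shows "qmap \<Delta> ` {x \<in> topspace X. qmap \<Delta> x \<in> S} = S"
proof
  show "S \<subseteq> qmap \<Delta> ` {x \<in> topspace X. qmap \<Delta> x \<in> S}"
  proof
    fix B assume "B \<in> S"
    with assms(2) have B: "B \<in> \<Delta>" by blast
    have "B \<subseteq> {x \<in> topspace X. qmap \<Delta> x \<in> S}"
      using partition_block_subset_topspace[OF assms(1) B] qmap_eq[OF assms(1) B] \<open>B \<in> S\<close> by auto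
    then have "qmap \<Delta> ` B \<subseteq> qmap \<Delta> ` {x \<in> topspace X. qmap \<Delta> x \<in> S}" by (rule image_mono)
    then show "B \<in> qmap \<Delta> ` {x \<in> topspace X. qmap \<Delta> x \<in> S}"
      using qmap_image_block[OF assms(1) B] by simp
  qed
qed blast

lemma openin_qtop:
  "openin (qtop X \<Delta>) V \<longleftrightarrow> V \<subseteq> \<Delta> \<and> openin X {x \<in> topspace X. qmap \<Delta> x \<in> V}"
proof -
  have "istopology (\<lambda>V. V \<subseteq> \<Delta> \<and> openin X {x \<in> topspace X. qmap \<Delta> x \<in> V})"
    unfolding istopology_def
  proof (rule conjI; intro allI impI)
    fix S T :: "'a set set"
    assume "S \<subseteq> \<Delta> \<and> openin X {x \<in> topspace X. qmap \<Delta> x \<in> S}"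
      and "T \<subseteq> \<Delta> \<and> openin X {x \<in> topspace X. qmap \<Delta> x \<in> T}"
    moreover have "{x \<in> topspace X. qmap \<Delta> x \<in> S \<inter> T} =
        {x \<in> topspace X. qmap \<Delta> x \<in> S} \<inter> {x \<in> topspace X. qmap \<Delta> x \<in> T}" by blast
    ultimately show "S \<inter> T \<subseteq> \<Delta> \<and> openin X {x \<in> topspace X. qmap \<Delta> x \<in> S \<inter> T}" by auto
  next
    fix K :: "'a set set set"
    assume "\<forall>S\<in>K. S \<subseteq> \<Delta> \<and> openin X {x \<in> topspace X. qmap \<Delta> x \<in> S}"
    moreover have "{x \<in> topspace X. qmap \<Delta> x \<in> \<Union>K} =
        (\<Union>S\<in>K. {x \<in> topspace X. qmap \<Delta> x \<in> S})" by blast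
    ultimately show "\<Union>K \<subseteq> \<Delta> \<and> openin X {x \<in> topspace X. qmap \<Delta> x \<in> \<Union>K}" by auto
  qed
  then show ?thesis unfolding qtop_def by simp
qed

lemma topspace_qtop:
  assumes "is_partition X \<Delta>"
  shows "topspace (qtop X \<Delta>) = \<Delta>"
proof (rule subset_antisym)
  show "topspace (qtop X \<Delta>) \<subseteq> \<Delta>"
    using openin_qtop[of X \<Delta> "topspace (qtop X \<Delta>)"] by simp
  have "{x \<in> topspace X. qmap \<Delta> x \<in> \<Delta>} = topspace X"
    using qmap_in_partition[OF assms] by blast
  then have "openin (qtop X \<Delta>) \<Delta>" unfolding openin_qtop by simp
  then show "\<Delta> \<subseteq> topspace (qtop X \<Delta>)" by (rule openin_subset)
qed

lemma continuous_map_qmap: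
  assumes "is_partition X \<Delta>"
  shows "continuous_map X (qtop X \<Delta>) (qmap \<Delta>)"
  unfolding continuous_map_def
  using qmap_in_partition[OF assms] topspace_qtop[OF assms] openin_qtop[of X \<Delta>] by auto

lemma sat_preimage:
  "sat X \<Delta> {x \<in> topspace X. qmap \<Delta> x \<in> V} = {x \<in> topspace X. qmap \<Delta> x \<in> V}"
  unfolding sat_def by auto

lemma sat_idem:
  assumes "N \<subseteq> topspace X"
  shows "sat X \<Delta> (sat X \<Delta> N) = sat X \<Delta> N"
  using assms unfolding sat_def by auto

lemma subset_sat:
  assumes "N \<subseteq> topspace X"
  shows "N \<subseteq> sat X \<Delta> N"
  using assms unfolding sat_def by auto

lemma openin_sat_if_open_map:
  assumes "open_map X (qtop X \<Delta>) (qmap \<Delta>)" and "openin X N"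
  shows "openin X (sat X \<Delta> N)"
  using assms openin_qtop[of X \<Delta> "qmap \<Delta> ` N"] unfolding open_map_def sat_def by blast

lemma Hpt_eq_Inter_open_nbhds:
  "Hpt Y y = \<Inter> {Y closure_of U | U. openin Y U \<and> y \<in> U}"
proof
  show "Hpt Y y \<subseteq> \<Inter> {Y closure_of U | U. openin Y U \<and> y \<in> U}"
    unfolding Hpt_def by (auto dest: openin_subset)
  show "\<Inter> {Y closure_of U | U. openin Y U \<and> y \<in> U} \<subseteq> Hpt Y y"
    unfolding Hpt_def by (blast dest: closure_of_mono)
qed

lemma mem_Hpt_iff:
  "z \<in> Hpt Y y \<longleftrightarrow> (\<forall>U. openin Y U \<and> y \<in> U \<longrightarrow> z \<in> Y closure_of U)"
  unfolding Hpt_eq_Inter_open_nbhds by blast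

lemma Hpt_subset_topspace:
  assumes "y \<in> topspace Y"
  shows "Hpt Y y \<subseteq> topspace Y"
  unfolding Hpt_eq_Inter_open_nbhds
  using assms closure_of_subset_topspace[of Y "topspace Y"] by blast

lemma open_map_preimage_closure_of:
  assumes "open_map X Y f" and "x \<in> topspace X" and "f x \<in> Y closure_of T"
  shows "x \<in> X closure_of {z \<in> topspace X. f z \<in> T}"
  unfolding in_closure_of
proof (intro conjI allI impI)
  show "x \<in> topspace X" by fact
  fix W assume W: "x \<in> W \<and> openin X W"
  then have "openin Y (f ` W)" and "f x \<in> f ` W"
    using assms(1) unfolding open_map_def by auto
  then obtain w where w: "w \<in> W" "f w \<in> T"
    using assms(3) unfolding in_closure_of by blast
  moreover have "w \<in> topspace X"
    using w(1) W openin_subset by blast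
  ultimately show "\<exists>z. z \<in> {z \<in> topspace X. f z \<in> T} \<and> z \<in> W" by blast
qed

lemma mem_HS_iff:
  "x \<in> HS X \<Delta> \<omega> \<longleftrightarrow> (\<forall>N. openin X N \<and> \<omega> \<subseteq> N \<and> sat X \<Delta> N = N \<longrightarrow> x \<in> X closure_of N)"
  unfolding HS_def by blast

lemma Hblk_subset_HS: "Hblk X \<Delta> \<omega> \<subseteq> HS X \<Delta> \<omega>"
  unfolding Hblk_def HS_def
proof (rule Inter_anti_mono, safe)
  fix N assume "openin X N" "\<omega> \<subseteq> N" "sat X \<Delta> N = N"
  then show "\<exists>M. X closure_of N = X closure_of sat X \<Delta> M \<and> openin X M \<and> \<omega> \<subseteq> M"
    by metis
qed

lemma HS_subset_Hblk_if_open_map: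
  assumes "open_map X (qtop X \<Delta>) (qmap \<Delta>)"
  shows "HS X \<Delta> \<omega> \<subseteq> Hblk X \<Delta> \<omega>"
  unfolding Hblk_def HS_def
proof (rule Inter_anti_mono, safe)
  fix N assume N: "openin X N" "\<omega> \<subseteq> N"
  have "N \<subseteq> topspace X" using N(1) by (rule openin_subset)
  have "openin X (sat X \<Delta> N)" using assms N(1) by (rule openin_sat_if_open_map)
  moreover have "\<omega> \<subseteq> sat X \<Delta> N" using N(2) subset_sat[OF \<open>N \<subseteq> topspace X\<close>] by (rule order_trans)
  moreover have "sat X \<Delta> (sat X \<Delta> N) = sat X \<Delta> N" using \<open>N \<subseteq> topspace X\<close> by (rule sat_idem)
  ultimately show "\<exists>M. X closure_of sat X \<Delta> N = X closure_of M \<and>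
      openin X M \<and> \<omega> \<subseteq> M \<and> sat X \<Delta> M = M" by blast
qed

lemma HS_subset_preimage_Hpt:
  assumes P: "is_partition X \<Delta>" and "\<omega> \<in> \<Delta>"
  shows "HS X \<Delta> \<omega> \<subseteq> {x \<in> topspace X. qmap \<Delta> x \<in> Hpt (qtop X \<Delta>) \<omega>}"
proof
  fix x assume x: "x \<in> HS X \<Delta> \<omega>"
  have closure_preimage: "x \<in> X closure_of {z \<in> topspace X. qmap \<Delta> z \<in> U}"
    if "openin (qtop X \<Delta>) U" "\<omega> \<in> U" for U
  proof -
    have "\<omega> \<subseteq> {z \<in> topspace X. qmap \<Delta> z \<in> U}"
      using that(2) qmap_eq[OF P \<open>\<omega> \<in> \<Delta>\<close>] partition_block_subset_topspace[OF P \<open>\<omega> \<in> \<Delta>\<close>]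
      by auto
    moreover have "openin X {z \<in> topspace X. qmap \<Delta> z \<in> U}"
      using that(1) unfolding openin_qtop by simp
    ultimately show ?thesis
      using x sat_preimage[of X \<Delta> U] unfolding mem_HS_iff by blast
  qed
  have "openin (qtop X \<Delta>) \<Delta>"
    using openin_topspace[of "qtop X \<Delta>"] topspace_qtop[OF P] by simp
  then have "x \<in> topspace X"
    by (rule subsetD[OF closure_of_subset_topspace closure_preimage[OF _ \<open>\<omega> \<in> \<Delta>\<close>]])
  moreover have "qmap \<Delta> x \<in> qtop X \<Delta> closure_of U"
    if "openin (qtop X \<Delta>) U" "\<omega> \<in> U" for U
  proof -
    let ?N = "{z \<in> topspace X. qmap \<Delta> z \<in> U}"
    have "qmap \<Delta> ` (X closure_of ?N) \<subseteq> qtop X \<Delta> closure_of (qmap \<Delta> ` ?N)"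
      using continuous_map_qmap[OF P] by (rule continuous_map_image_closure_subset)
    also have "\<dots> \<subseteq> qtop X \<Delta> closure_of U" by (rule closure_of_mono) blast
    finally show ?thesis using closure_preimage[OF that] by blast
  qed
  ultimately show "x \<in> {x \<in> topspace X. qmap \<Delta> x \<in> Hpt (qtop X \<Delta>) \<omega>}"
    by (simp add: mem_Hpt_iff)
qed

lemma preimage_Hpt_subset_HS_if_open_map:
  assumes P: "is_partition X \<Delta>" and "\<omega> \<in> \<Delta>" and om: "open_map X (qtop X \<Delta>) (qmap \<Delta>)"
  shows "{x \<in> topspace X. qmap \<Delta> x \<in> Hpt (qtop X \<Delta>) \<omega>} \<subseteq> HS X \<Delta> \<omega>"
proof (rule subsetI, unfold mem_HS_iff, intro allI impI, elim CollectE conjE)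
  fix x N
  assume x: "x \<in> topspace X" "qmap \<Delta> x \<in> Hpt (qtop X \<Delta>) \<omega>"
    and N: "openin X N" "\<omega> \<subseteq> N" "sat X \<Delta> N = N"
  have "\<omega> \<in> qmap \<Delta> ` N"
    using image_mono[OF N(2), of "qmap \<Delta>"] qmap_image_block[OF P \<open>\<omega> \<in> \<Delta>\<close>] by simp
  moreover have "openin (qtop X \<Delta>) (qmap \<Delta> ` N)"
    using om N(1) by (simp add: open_map_def)
  ultimately have "qmap \<Delta> x \<in> qtop X \<Delta> closure_of (qmap \<Delta> ` N)"
    using x(2) by (simp add: mem_Hpt_iff)
  with om x(1) have "x \<in> X closure_of {z \<in> topspace X. qmap \<Delta> z \<in> qmap \<Delta> ` N}"
    by (rule open_map_preimage_closure_of)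
  then show "x \<in> X closure_of N" using N(3) unfolding sat_def by simp
qed

theorem lemma3p5:
  fixes X :: "'a topology" and \<Delta> :: "'a set set" and \<omega> :: "'a set" and y :: "'a set"
  assumes "is_partition X \<Delta>"
    and "\<omega> \<in> \<Delta>"
    and "qmap \<Delta> ` \<omega> = {y}"
  shows "Hblk X \<Delta> \<omega> \<subseteq> HS X \<Delta> \<omega>
       \<and> HS X \<Delta> \<omega> \<subseteq> {x \<in> topspace X. qmap \<Delta> x \<in> Hpt (qtop X \<Delta>) y}
       \<and> (open_map X (qtop X \<Delta>) (qmap \<Delta>) \<longrightarrow>
            Hblk X \<Delta> \<omega> = HS X \<Delta> \<omega>
          \<and> HS X \<Delta> \<omega> = {x \<in> topspace X. qmap \<Delta> x \<in> Hpt (qtop X \<Delta>) y}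
          \<and> qmap \<Delta> ` HS X \<Delta> \<omega> = Hpt (qtop X \<Delta>) y)"
proof -
  have "y = \<omega>" using assms(3) qmap_image_block[OF assms(1,2)] by simp
  have Hpt_in_partition: "Hpt (qtop X \<Delta>) \<omega> \<subseteq> \<Delta>"
    using Hpt_subset_topspace[of \<omega> "qtop X \<Delta>"] unfolding topspace_qtop[OF assms(1)]
    using assms(2) .
  show ?thesis
    unfolding \<open>y = \<omega>\<close>
  proof (intro conjI impI)
    show "Hblk X \<Delta> \<omega> \<subseteq> HS X \<Delta> \<omega>" by (rule Hblk_subset_HS)
    show HS_le: "HS X \<Delta> \<omega> \<subseteq> {x \<in> topspace X. qmap \<Delta> x \<in> Hpt (qtop X \<Delta>) \<omega>}"
      using assms(1,2) by (rule HS_subset_preimage_Hpt)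
    assume om: "open_map X (qtop X \<Delta>) (qmap \<Delta>)"
    show "Hblk X \<Delta> \<omega> = HS X \<Delta> \<omega>"
      using Hblk_subset_HS HS_subset_Hblk_if_open_map[OF om] by (rule subset_antisym)
    show HS_eq: "HS X \<Delta> \<omega> = {x \<in> topspace X. qmap \<Delta> x \<in> Hpt (qtop X \<Delta>) \<omega>}"
      using HS_le preimage_Hpt_subset_HS_if_open_map[OF assms(1,2) om] by (rule subset_antisym)
    show "qmap \<Delta> ` HS X \<Delta> \<omega> = Hpt (qtop X \<Delta>) \<omega>"
      unfolding HS_eq using assms(1) Hpt_in_partition by (rule qmap_image_preimage)
  qed
qed

end
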